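(* Let $\mathcal H_A,\mathcal H_B$ be finite-dimensional with $d_B=\dim\mathcal H_B$, and let $|\Psi\rangle=\sum_{i=1}^{d_B}\lambda_i|\phi_i^A\rangle\otimes|\xi_i^B\rangle$ be a pure state with full Schmidt rank, i.e. $\{|\phi_i^A\rangle\}$ orthonormal in $\mathcal H_A$, $\{|\xi_i^B\rangle\}$ an orthonormal basis of $\mathcal H_B$, and $\lambda_i\neq 0$ for all $i$. Then the maximal steered coherence of $|\Psi\rangle\langle\Psi|$ attains the largest possible value, namely $\mathcal C(|\Psi\rangle\langle\Psi|)=d_B-1$, the coherence of the maximally coherent state $\frac{1}{\sqrt{d_B}}\sum_{i=1}^{d_B}|\xi_i^B\rangle$.
   Context: For a bipartite state $\rho$ and a POVM element $M$ on $\mathcal H_A$ ($0\le M\le \mathbb 1$) with $p_M:=\mathrm{tr}(M\otimes\mathbb 1\,\rho)>0$, Bob's steered state is $\rho_B^M:=\mathrm{tr}_A(M\otimes\mathbb 1\,\rho)/p_M$. The $\ell_1$-coherence of a state $\sigma$ in an orthonormal basis $\Xi=\{|\xi_i\rangle\}$ is $C(\sigma,\Xi)=\sum_{i\neq j}|\langle\xi_i|\sigma|\xi_j\rangle|$; for a $d_B$-dimensional system it is at most $d_B-1$. The maximal steered coherence is $$\mathcal C(\rho)=\inf_{\Xi}\ \max_{M}\ \frac{1}{p_M}\sum_{i\neq j}\big|\langle\xi_i|\mathrm{tr}_A(M\otimes \mathbb 1\,\rho)|\xi_j\rangle\big|,$$ where the infimum is over all orthonormal eigenbases $\Xi$ of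 $\rho_B=\mathrm{tr}_A\rho$ (unique up to phases when $\rho_B$ is non-degenerate) and the maximum is over POVM elements $M$ on $\mathcal H_A$ with $p_M>0$. *)

theory Defs
  imports Complex_Main
begin

text \<open>H_A = C^dA, H_B = C^dB with computational bases indexed by
  {0..<dA}, {0..<dB}. Vectors are functions nat => complex (only indices below the
  dimension matter); operators on C^n are matrices nat => nat => complex; operators
  on H_A (x) H_B are functions (nat*nat) => (nat*nat) => complex, entry
  rho (a,b) (a',b') = <a,b| rho |a',b'>.\<close>

definition inner_vec :: "nat \<Rightarrow> (nat \<Rightarrow> complex) \<Rightarrow> (nat \<Rightarrow> complex) \<Rightarrow> complex" where
  "inner_vec n u v = (\<Sum>k<n. cnj (u k) * v k)"

definition orthonormal_family :: "nat \<Rightarrow> nat \<Rightarrow> (nat \<Rightarrow> nat \<Rightarrow> complex) \<Rightarrow> bool" where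
  "orthonormal_family n m e \<longleftrightarrow>
     (\<forall>i<m. \<forall>j<m. inner_vec n (e i) (e j) = (if i = j then 1 else 0))"

definition qform :: "nat \<Rightarrow> (nat \<Rightarrow> nat \<Rightarrow> complex) \<Rightarrow> (nat \<Rightarrow> complex) \<Rightarrow> complex" where
  "qform n M v = (\<Sum>a<n. \<Sum>a'<n. cnj (v a) * M a a' * v a')"

definition povm_element :: "nat \<Rightarrow> (nat \<Rightarrow> nat \<Rightarrow> complex) \<Rightarrow> bool" where
  "povm_element n M \<longleftrightarrow>
     (\<forall>v. qform n M v \<in> \<real> \<and> 0 \<le> Re (qform n M v) \<and>
          Re (qform n M v) \<le> Re (inner_vec n v v))"

definition ptrace_A :: "nat \<Rightarrow> ((nat \<times> nat) \<Rightarrow> (nat \<times> nat) \<Rightarrow> complex) \<Rightarrow> nat \<Rightarrow> nat \<Rightarrow> complex" where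
  "ptrace_A dA \<rho> b b' = (\<Sum>a<dA. \<rho> (a, b) (a, b'))"

text \<open>Unnormalised steered operator tr_A((M (x) 1) rho).\<close>
definition steered_unnorm :: "nat \<Rightarrow> (nat \<Rightarrow> nat \<Rightarrow> complex) \<Rightarrow> ((nat \<times> nat) \<Rightarrow> (nat \<times> nat) \<Rightarrow> complex)
    \<Rightarrow> nat \<Rightarrow> nat \<Rightarrow> complex" where
  "steered_unnorm dA M \<rho> b b' = (\<Sum>a<dA. \<Sum>a'<dA. M a a' * \<rho> (a', b) (a, b'))"

definition prob_M :: "nat \<Rightarrow> nat \<Rightarrow> (nat \<Rightarrow> nat \<Rightarrow> complex) \<Rightarrow> ((nat \<times> nat) \<Rightarrow> (nat \<times> nat) \<Rightarrow> complex) \<Rightarrow> real" where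
  "prob_M dA dB M \<rho> = Re (\<Sum>b<dB. steered_unnorm dA M \<rho> b b)"

definition mat_elem :: "nat \<Rightarrow> (nat \<Rightarrow> complex) \<Rightarrow> (nat \<Rightarrow> nat \<Rightarrow> complex) \<Rightarrow> (nat \<Rightarrow> complex) \<Rightarrow> complex" where
  "mat_elem n u X v = (\<Sum>b<n. \<Sum>b'<n. cnj (u b) * X b b' * v b')"

definition l1_coh :: "nat \<Rightarrow> (nat \<Rightarrow> nat \<Rightarrow> complex) \<Rightarrow> (nat \<Rightarrow> nat \<Rightarrow> complex) \<Rightarrow> real" where
  "l1_coh n X \<xi> = (\<Sum>i<n. \<Sum>j<n. if i \<noteq> j then cmod (mat_elem n (\<xi> i) X (\<xi> j)) else 0)"

definition orthonormal_eigenbasis :: "nat \<Rightarrow> (nat \<Rightarrow> nat \<Rightarrow> complex) \<Rightarrow> (nat \<Rightarrow> nat \<Rightarrow> complex) \<Rightarrow> bool" where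
  "orthonormal_eigenbasis n X \<xi> \<longleftrightarrow>
     orthonormal_family n n \<xi> \<and>
     (\<forall>i<n. \<exists>\<mu>. \<forall>b<n. (\<Sum>b'<n. X b b' * \<xi> i b') = \<mu> * \<xi> i b)"

definition max_steered_coherence :: "nat \<Rightarrow> nat \<Rightarrow> ((nat \<times> nat) \<Rightarrow> (nat \<times> nat) \<Rightarrow> complex) \<Rightarrow> real" where
  "max_steered_coherence dA dB \<rho> =
     (INF \<xi> \<in> {\<xi>. orthonormal_eigenbasis dB (ptrace_A dA \<rho>) \<xi>}.
        SUP M \<in> {M. povm_element dA M \<and> prob_M dA dB M \<rho> > 0}.
          l1_coh dB (steered_unnorm dA M \<rho>) \<xi> / prob_M dA dB M \<rho>)"

text \<open>The projector |Psi><Psi| for Psi = sum_{a,b} psi a b |a>|b>.\<close>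
definition proj_pure :: "(nat \<Rightarrow> nat \<Rightarrow> complex) \<Rightarrow> (nat \<times> nat) \<Rightarrow> (nat \<times> nat) \<Rightarrow> complex" where
  "proj_pure \<psi> x y = \<psi> (fst x) (snd x) * cnj (\<psi> (fst y) (snd y))"

end

theory Submission
  imports Defs "Jordan_Normal_Form.Determinant" "HOL-Analysis.Convex"
begin

text \<open>
  Write \<open>y\<^sub>i = (1 \<otimes> \<langle>\<eta>\<^sub>i|)|\<Psi>\<rangle>\<close> for an orthonormal basis \<open>\<eta>\<close> of \<open>H\<^sub>B\<close>. The steered matrix
  elements are \<open>\<langle>\<eta>\<^sub>i|tr\<^sub>A((M \<otimes> 1)|\<Psi>\<rangle>\<langle>\<Psi>|)|\<eta>\<^sub>j\<rangle> = \<langle>y\<^sub>j|M|y\<^sub>i\<rangle>\<close>, so positivity of \<open>M\<close> gives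
  \<open>|\<langle>y\<^sub>j|M|y\<^sub>i\<rangle>| \<le> (\<langle>y\<^sub>i|M|y\<^sub>i\<rangle> + \<langle>y\<^sub>j|M|y\<^sub>j\<rangle>)/2\<close>; summing over \<open>i \<noteq> j\<close> bounds the
  unnormalised coherence by \<open>(d\<^sub>B - 1) p\<^sub>M\<close> in every basis. Conversely, full Schmidt rank
  makes \<open>a \<mapsto> \<Psi>\<close> onto \<open>H\<^sub>B\<close>, so some \<open>u\<close> has \<open>\<langle>u|y\<^sub>i\<rangle> = 1\<close> for all \<open>i\<close>; the rank-one
  effect \<open>|u\<rangle>\<langle>u|/\<parallel>u\<parallel>\<^sup>2\<close> makes all steered matrix elements equal and attains \<open>d\<^sub>B - 1\<close>.
  The Schmidt basis is an eigenbasis of \<open>\<rho>\<^sub>B\<close>, so the infimum is over a nonempty set.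
\<close>

lemma orthonormal_family_columns:
  assumes "orthonormal_family n n e" "i < n" "j < n"
  shows "(\<Sum>k<n. cnj (e k i) * e k j) = (if i = j then 1 else 0)"
proof -
  define Q :: "complex mat" where "Q = mat n n (\<lambda>(k, b). e k b)"
  define Qh :: "complex mat" where "Qh = mat n n (\<lambda>(b, k). cnj (e k b))"
  have carrier: "Q \<in> carrier_mat n n" "Qh \<in> carrier_mat n n" by (auto simp: Q_def Qh_def)
  have "Q * Qh = 1\<^sub>m n"
  proof (rule eq_matI)
    fix a b assume ab: "a < dim_row (1\<^sub>m n)" "b < dim_col (1\<^sub>m n)"
    have "(Q * Qh) $$ (a, b) = inner_vec n (e b) (e a)"
      using ab by (simp add: Q_def Qh_def inner_vec_def scalar_prod_def lessThan_atLeast0 mult.commute)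
    then show "(Q * Qh) $$ (a, b) = 1\<^sub>m n $$ (a, b)"
      using assms(1) ab unfolding orthonormal_family_def by auto
  qed (auto simp: Q_def Qh_def)
  then have "Qh * Q = 1\<^sub>m n" using mat_mult_left_right_inverse carrier by blast
  then have "(Qh * Q) $$ (i, j) = 1\<^sub>m n $$ (i, j)" by simp
  then show ?thesis using assms(2,3) by (simp add: Q_def Qh_def scalar_prod_def lessThan_atLeast0)
qed

lemma sum_mat_elem_orthonormal_basis:
  assumes "orthonormal_family n n e"
  shows "(\<Sum>i<n. mat_elem n (e i) X (e i)) = (\<Sum>b<n. X b b)"
proof -
  have "(\<Sum>i<n. mat_elem n (e i) X (e i)) = (\<Sum>b<n. \<Sum>b'<n. X b b' * (\<Sum>i<n. cnj (e i b) * e i b'))"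
    unfolding mat_elem_def sum_distrib_left
    by (subst sum.swap, subst (2) sum.swap) (simp add: mult_ac)
  also have "\<dots> = (\<Sum>b<n. \<Sum>b'<n. if b = b' then X b b else 0)"
    by (intro sum.cong refl) (simp add: orthonormal_family_columns[OF assms])
  finally show ?thesis by simp
qed

definition sesq_form :: "nat \<Rightarrow> (nat \<Rightarrow> nat \<Rightarrow> complex) \<Rightarrow> (nat \<Rightarrow> complex) \<Rightarrow> (nat \<Rightarrow> complex) \<Rightarrow> complex" where
  "sesq_form n M u v = (\<Sum>a<n. \<Sum>a'<n. cnj (u a) * M a a' * v a')"

lemma qform_eq_sesq_form: "qform n M v = sesq_form n M v v"
  unfolding qform_def sesq_form_def ..

lemma qform_add_scaled:
  "qform n M (\<lambda>a. u a + w * v a)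
     = sesq_form n M u u + w * sesq_form n M u v + cnj w * sesq_form n M v u + cnj w * w * sesq_form n M v v"
  unfolding qform_def sesq_form_def by (simp add: sum.distrib sum_distrib_left algebra_simps)

definition positive_semidef :: "nat \<Rightarrow> (nat \<Rightarrow> nat \<Rightarrow> complex) \<Rightarrow> bool" where
  "positive_semidef n M \<longleftrightarrow> (\<forall>v. qform n M v \<in> \<real> \<and> 0 \<le> Re (qform n M v))"

lemma povm_element_imp_positive_semidef: "povm_element n M \<Longrightarrow> positive_semidef n M"
  unfolding povm_element_def positive_semidef_def by blast

lemma norm_sesq_form_le:
  assumes "positive_semidef n M"
  shows "cmod (sesq_form n M u v) \<le> (Re (qform n M u) + Re (qform n M v)) / 2"
proof -
  let ?p = "sesq_form n M u v" and ?q = "sesq_form n M v u"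
  have real: "\<And>x. Im (qform n M x) = 0" and pos: "\<And>x. 0 \<le> Re (qform n M x)"
    using assms complex_is_Real_iff unfolding positive_semidef_def by blast+
  have "Im (?p + ?q) = 0" "Re (?p - ?q) = 0"
    using real[of "\<lambda>a. u a + 1 * v a"] real[of "\<lambda>a. u a + \<i> * v a"] real[of u] real[of v]
      qform_add_scaled[of n M u 1 v] qform_add_scaled[of n M u \<i> v] qform_eq_sesq_form[of n M]
    by simp_all
  then have hermitian: "?q = cnj ?p" by (simp add: complex_eq_iff)
  show ?thesis
  proof (cases "?p = 0")
    case True then show ?thesis using pos[of u] pos[of v] by simp
  next
    case False
    \<comment> \<open>rotate the phase of \<open>v\<close> so that the cross terms become \<open>-2|p|\<close>\<close>
    define w where "w = - cnj ?p / cmod ?p"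
    have norm_sq: "cnj ?p * ?p = of_real (cmod ?p) * of_real (cmod ?p)"
      using complex_norm_square[of ?p] by (simp add: mult.commute power2_eq_square)
    have "cnj w * w = 1" "w * ?p = - cmod ?p"
      using False norm_sq unfolding w_def by (simp_all add: mult.commute)
    moreover from this(2) have "cnj w * ?q = - cmod ?p"
      unfolding hermitian by (metis complex_cnj_mult complex_cnj_complex_of_real complex_cnj_minus)
    moreover have "0 \<le> Re (qform n M (\<lambda>a. u a + w * v a))" by (rule pos)
    ultimately show ?thesis by (simp add: qform_add_scaled qform_eq_sesq_form)
  qed
qed

lemma sum_off_diagonal_row:
  fixes g :: "nat \<Rightarrow> real"
  assumes "i < n"
  shows "(\<Sum>j<n. if i \<noteq> j then g j else 0) = (\<Sum>j<n. g j) - g i"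
proof -
  have "(\<Sum>j<n. if i \<noteq> j then g j else 0) = (\<Sum>j<n. g j - (if i = j then g j else 0))"
    by (rule sum.cong) auto
  then show ?thesis using assms by (simp add: sum_subtractf)
qed

lemma sum_off_diagonal_mean:
  fixes r :: "nat \<Rightarrow> real"
  shows "(\<Sum>i<n. \<Sum>j<n. if i \<noteq> j then (r i + r j) / 2 else 0) = (real n - 1) * (\<Sum>i<n. r i)"
proof -
  have "(\<Sum>i<n. \<Sum>j<n. if i \<noteq> j then (r i + r j) / 2 else 0)
      = (\<Sum>i<n. (real n * r i + (\<Sum>j<n. r j)) / 2 - r i)"
    by (intro sum.cong refl)
      (simp add: sum_off_diagonal_row[of _ _ "\<lambda>j. (r _ + r j) / 2"] sum.distrib sum_divide_distrib[symmetric])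
  also have "\<dots> = (real n - 1) * (\<Sum>i<n. r i)"
    by (simp add: sum_subtractf sum_divide_distrib[symmetric] sum.distrib sum_distrib_left[symmetric] algebra_simps)
  finally show ?thesis .
qed

lemma sum_swap_nested_pairs:
  "(\<Sum>x\<in>A. \<Sum>y\<in>B. \<Sum>z\<in>C. \<Sum>w\<in>D. f x y z w) = (\<Sum>z\<in>C. \<Sum>w\<in>D. \<Sum>x\<in>A. \<Sum>y\<in>B. f x y z w)"
proof -
  have "(\<Sum>x\<in>A. \<Sum>y\<in>B. \<Sum>z\<in>C. \<Sum>w\<in>D. f x y z w) = (\<Sum>x\<in>A. \<Sum>z\<in>C. \<Sum>y\<in>B. \<Sum>w\<in>D. f x y z w)"
    by (intro sum.cong refl) (rule sum.swap)
  also have "\<dots> = (\<Sum>x\<in>A. \<Sum>z\<in>C. \<Sum>w\<in>D. \<Sum>y\<in>B. f x y z w)"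
    by (intro sum.cong refl) (rule sum.swap)
  also have "\<dots> = (\<Sum>z\<in>C. \<Sum>x\<in>A. \<Sum>w\<in>D. \<Sum>y\<in>B. f x y z w)"
    by (rule sum.swap)
  also have "\<dots> = (\<Sum>z\<in>C. \<Sum>w\<in>D. \<Sum>x\<in>A. \<Sum>y\<in>B. f x y z w)"
    by (intro sum.cong refl) (rule sum.swap)
  finally show ?thesis .
qed

text \<open>\<open>contract_B dB \<psi> v\<close> is the vector \<open>(1 \<otimes> \<langle>v|)|\<Psi>\<rangle>\<close> of \<open>H\<^sub>A\<close>.\<close>
definition contract_B :: "nat \<Rightarrow> (nat \<Rightarrow> nat \<Rightarrow> complex) \<Rightarrow> (nat \<Rightarrow> complex) \<Rightarrow> nat \<Rightarrow> complex" where
  "contract_B dB \<psi> v a = (\<Sum>b<dB. \<psi> a b * cnj (v b))"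

lemma mat_elem_steered_unnorm_proj_pure:
  "mat_elem dB u (steered_unnorm dA M (proj_pure \<psi>)) v
     = sesq_form dA M (contract_B dB \<psi> v) (contract_B dB \<psi> u)"
proof -
  have "mat_elem dB u (steered_unnorm dA M (proj_pure \<psi>)) v
      = (\<Sum>b<dB. \<Sum>b'<dB. \<Sum>a<dA. \<Sum>a'<dA. cnj (u b) * M a a' * \<psi> a' b * cnj (\<psi> a b') * v b')"
    unfolding mat_elem_def steered_unnorm_def proj_pure_def
    by (simp add: sum_distrib_left sum_distrib_right mult.assoc)
  also have "\<dots> = (\<Sum>a<dA. \<Sum>a'<dA. \<Sum>b'<dB. \<Sum>b<dB. cnj (u b) * M a a' * \<psi> a' b * cnj (\<psi> a b') * v b')"
    by (subst sum_swap_nested_pairs) (intro sum.cong refl sum.swap)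
  also have "\<dots> = sesq_form dA M (contract_B dB \<psi> v) (contract_B dB \<psi> u)"
    unfolding sesq_form_def contract_B_def
    by (simp add: sum_distrib_left sum_distrib_right mult.commute mult.left_commute)
  finally show ?thesis .
qed

lemma prob_M_proj_pure:
  assumes "orthonormal_family dB dB \<eta>"
  shows "prob_M dA dB M (proj_pure \<psi>) = Re (\<Sum>i<dB. qform dA M (contract_B dB \<psi> (\<eta> i)))"
  unfolding prob_M_def sum_mat_elem_orthonormal_basis[OF assms, symmetric]
  by (simp add: mat_elem_steered_unnorm_proj_pure qform_eq_sesq_form)

lemma l1_coh_steered_proj_pure_le:
  assumes onb: "orthonormal_family dB dB \<eta>" and psd: "positive_semidef dA M"
  shows "l1_coh dB (steered_unnorm dA M (proj_pure \<psi>)) \<eta> \<le> (real dB - 1) * prob_M dA dB M (proj_pure \<psi>)"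
proof -
  define r where "r i = Re (qform dA M (contract_B dB \<psi> (\<eta> i)))" for i
  have "cmod (mat_elem dB (\<eta> i) (steered_unnorm dA M (proj_pure \<psi>)) (\<eta> j)) \<le> (r i + r j) / 2" for i j
    using norm_sesq_form_le[OF psd] unfolding mat_elem_steered_unnorm_proj_pure r_def
    by (metis add.commute)
  then have "l1_coh dB (steered_unnorm dA M (proj_pure \<psi>)) \<eta>
      \<le> (\<Sum>i<dB. \<Sum>j<dB. if i \<noteq> j then (r i + r j) / 2 else 0)"
    unfolding l1_coh_def by (intro sum_mono) auto
  also have "\<dots> = (real dB - 1) * prob_M dA dB M (proj_pure \<psi>)"
    unfolding sum_off_diagonal_mean prob_M_proj_pure[OF onb] r_def by (simp add: Re_sum)
  finally show ?thesis .
qed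

lemma norm_sum_mult_squared_le:
  fixes u v :: "nat \<Rightarrow> complex"
  shows "(cmod (\<Sum>a<n. u a * v a))\<^sup>2 \<le> (\<Sum>a<n. (cmod (u a))\<^sup>2) * (\<Sum>a<n. (cmod (v a))\<^sup>2)"
proof -
  have "cmod (\<Sum>a<n. u a * v a) \<le> (\<Sum>a<n. cmod (u a) * cmod (v a))"
    by (rule order_trans[OF norm_sum]) (simp add: norm_mult)
  then have "(cmod (\<Sum>a<n. u a * v a))\<^sup>2 \<le> (\<Sum>a<n. cmod (u a) * cmod (v a))\<^sup>2"
    by (rule power_mono) simp
  also have "\<dots> \<le> (\<Sum>a<n. (cmod (u a))\<^sup>2) * (\<Sum>a<n. (cmod (v a))\<^sup>2)"
    by (rule Cauchy_Schwarz_ineq_sum)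
  finally show ?thesis .
qed

lemma sesq_form_rank_one:
  "sesq_form n (\<lambda>a a'. cnj (u a) * u a' / of_real K) x z
     = cnj (\<Sum>a<n. u a * x a) * (\<Sum>a<n. u a * z a) / of_real K"
  unfolding sesq_form_def by (simp add: sum_distrib_left sum_distrib_right sum_divide_distrib mult_ac)

lemma povm_element_rank_one:
  assumes K: "K = (\<Sum>a<n. (cmod (u a))\<^sup>2)" "K > 0"
  shows "povm_element n (\<lambda>a a'. cnj (u a) * u a' / of_real K)"
  unfolding povm_element_def
proof (intro allI conjI)
  fix v
  define S where "S = (\<Sum>a<n. u a * v a)"
  have q: "qform n (\<lambda>a a'. cnj (u a) * u a' / of_real K) v = of_real ((cmod S)\<^sup>2 / K)"
    unfolding qform_eq_sesq_form sesq_form_rank_one S_def[symmetric]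
    by (metis complex_norm_square mult.commute of_real_divide)
  then show "qform n (\<lambda>a a'. cnj (u a) * u a' / of_real K) v \<in> \<real>"
    and "0 \<le> Re (qform n (\<lambda>a a'. cnj (u a) * u a' / of_real K) v)"
    using K by simp_all
  have "(cmod S)\<^sup>2 \<le> K * (\<Sum>a<n. (cmod (v a))\<^sup>2)"
    unfolding S_def K(1) by (rule norm_sum_mult_squared_le)
  moreover have "Re (inner_vec n v v) = (\<Sum>a<n. (cmod (v a))\<^sup>2)"
    unfolding inner_vec_def by (simp add: mult.commute[of "cnj _"] complex_norm_square[symmetric])
  ultimately show "Re (qform n (\<lambda>a a'. cnj (u a) * u a' / of_real K) v) \<le> Re (inner_vec n v v)"
    unfolding q using K(2) by (simp add: divide_le_eq mult.commute)
qed

lemma steered_l1_coh_rank_one: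
  assumes onb: "orthonormal_family dB dB \<eta>" and dB: "0 < dB"
    and steer: "\<forall>i<dB. (\<Sum>a<dA. u a * contract_B dB \<psi> (\<eta> i) a) = 1"
    and K_def: "K = (\<Sum>a<dA. (cmod (u a))\<^sup>2)"
    and M_def: "M = (\<lambda>a a'. cnj (u a) * u a' / of_real K)"
  shows "povm_element dA M" "0 < prob_M dA dB M (proj_pure \<psi>)"
    "l1_coh dB (steered_unnorm dA M (proj_pure \<psi>)) \<eta> / prob_M dA dB M (proj_pure \<psi>) = real dB - 1"
proof -
  have "u \<noteq> (\<lambda>_. 0)" using steer dB by auto
  then have "K \<noteq> 0"
    using steer dB unfolding K_def by (auto simp: sum_nonneg_eq_0_iff)
  then have K: "K > 0" unfolding K_def by (simp add: sum_nonneg order_le_neq_trans)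
  then show "povm_element dA M" unfolding M_def by (intro povm_element_rank_one K_def)
  have elem: "mat_elem dB (\<eta> i) (steered_unnorm dA M (proj_pure \<psi>)) (\<eta> j) = 1 / of_real K"
    if "i < dB" "j < dB" for i j
    using steer that by (simp add: mat_elem_steered_unnorm_proj_pure M_def sesq_form_rank_one)
  have prob: "prob_M dA dB M (proj_pure \<psi>) = real dB / K"
    using elem unfolding prob_M_def sum_mat_elem_orthonormal_basis[OF onb, symmetric] by simp
  have "l1_coh dB (steered_unnorm dA M (proj_pure \<psi>)) \<eta> = (\<Sum>i<dB. \<Sum>j<dB. if i \<noteq> j then 1 / K else 0)"
    unfolding l1_coh_def using elem K by (intro sum.cong refl) (simp add: norm_divide)
  also have "\<dots> = real dB * (real dB - 1) / K"
    using K by (simp add: sum_off_diagonal_row[of _ _ "\<lambda>j. 1 / K"] field_simps)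
  finally show "0 < prob_M dA dB M (proj_pure \<psi>)"
    "l1_coh dB (steered_unnorm dA M (proj_pure \<psi>)) \<eta> / prob_M dA dB M (proj_pure \<psi>) = real dB - 1"
    unfolding prob using K dB by (simp_all add: field_simps)
qed

lemma orthonormal_family_coeff:
  assumes "orthonormal_family n m e" "k < m"
  shows "(\<Sum>x<n. (\<Sum>i<m. c i * e i x) * cnj (e k x)) = c k"
proof -
  have "(\<Sum>x<n. (\<Sum>i<m. c i * e i x) * cnj (e k x)) = (\<Sum>i<m. c i * inner_vec n (e k) (e i))"
    unfolding inner_vec_def sum_distrib_left sum_distrib_right by (subst sum.swap) (simp add: mult_ac)
  also have "\<dots> = (\<Sum>i<m. if i = k then c k else 0)"
    using assms unfolding orthonormal_family_def by (intro sum.cong refl) auto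
  finally show ?thesis using assms(2) by simp
qed

lemma schmidt_contract_A:
  assumes phi_on: "orthonormal_family dA dB \<phi>"
    and schmidt: "\<forall>a<dA. \<forall>b<dB. \<psi> a b = (\<Sum>i<dB. complex_of_real (lam i) * \<phi> i a * \<xi> i b)"
    and "k < dB" "b < dB"
  shows "(\<Sum>a<dA. \<psi> a b * cnj (\<phi> k a)) = of_real (lam k) * \<xi> k b"
proof -
  have "(\<Sum>a<dA. \<psi> a b * cnj (\<phi> k a))
      = (\<Sum>a<dA. (\<Sum>i<dB. (of_real (lam i) * \<xi> i b) * \<phi> i a) * cnj (\<phi> k a))"
    using schmidt assms(4) by (intro sum.cong refl) (simp add: mult_ac)
  then show ?thesis using orthonormal_family_coeff[OF phi_on assms(3)] by simp
qed

lemma schmidt_contract_B: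
  assumes xi_onb: "orthonormal_family dB dB \<xi>"
    and schmidt: "\<forall>a<dA. \<forall>b<dB. \<psi> a b = (\<Sum>i<dB. complex_of_real (lam i) * \<phi> i a * \<xi> i b)"
    and "k < dB" "a < dA"
  shows "contract_B dB \<psi> (\<xi> k) a = of_real (lam k) * \<phi> k a"
proof -
  have "contract_B dB \<psi> (\<xi> k) a
      = (\<Sum>b<dB. (\<Sum>i<dB. (of_real (lam i) * \<phi> i a) * \<xi> i b) * cnj (\<xi> k b))"
    unfolding contract_B_def using schmidt assms(4) by (intro sum.cong refl) (simp add: mult_ac)
  then show ?thesis using orthonormal_family_coeff[OF xi_onb assms(3)] by simp
qed

lemma schmidt_full_rank_onto:
  assumes phi_on: "orthonormal_family dA dB \<phi>"
    and xi_onb: "orthonormal_family dB dB \<xi>"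
    and lam_nz: "\<forall>i<dB. lam i \<noteq> 0"
    and schmidt: "\<forall>a<dA. \<forall>b<dB. \<psi> a b = (\<Sum>i<dB. complex_of_real (lam i) * \<phi> i a * \<xi> i b)"
  obtains u where "\<forall>b<dB. (\<Sum>a<dA. u a * \<psi> a b) = w b"
proof
  define \<alpha> where "\<alpha> j = (\<Sum>b<dB. cnj (\<xi> j b) * w b) / of_real (lam j)" for j
  define u where "u a = (\<Sum>j<dB. \<alpha> j * cnj (\<phi> j a))" for a
  show "\<forall>b<dB. (\<Sum>a<dA. u a * \<psi> a b) = w b"
  proof (intro allI impI)
    fix b assume b: "b < dB"
    have "(\<Sum>a<dA. u a * \<psi> a b) = (\<Sum>j<dB. \<alpha> j * (\<Sum>a<dA. \<psi> a b * cnj (\<phi> j a)))"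
      unfolding u_def sum_distrib_left sum_distrib_right by (subst sum.swap) (simp add: mult_ac)
    also have "\<dots> = (\<Sum>j<dB. \<alpha> j * of_real (lam j) * \<xi> j b)"
      using schmidt_contract_A[OF phi_on schmidt _ b] by (simp add: mult.assoc)
    also have "\<dots> = (\<Sum>j<dB. (\<Sum>b'<dB. cnj (\<xi> j b') * w b') * \<xi> j b)"
      using lam_nz unfolding \<alpha>_def by (intro sum.cong refl) simp
    also have "\<dots> = (\<Sum>b'<dB. w b' * (\<Sum>j<dB. cnj (\<xi> j b') * \<xi> j b))"
      unfolding sum_distrib_left sum_distrib_right by (subst sum.swap) (simp add: mult_ac)
    also have "\<dots> = w b"
      using b by (simp add: orthonormal_family_columns[OF xi_onb] if_distrib cong: if_cong)
    finally show "(\<Sum>a<dA. u a * \<psi> a b) = w b" .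
  qed
qed

lemma exists_povm_steered_l1_coh_eq:
  assumes phi_on: "orthonormal_family dA dB \<phi>"
    and xi_onb: "orthonormal_family dB dB \<xi>"
    and lam_nz: "\<forall>i<dB. lam i \<noteq> 0"
    and schmidt: "\<forall>a<dA. \<forall>b<dB. \<psi> a b = (\<Sum>i<dB. complex_of_real (lam i) * \<phi> i a * \<xi> i b)"
    and onb: "orthonormal_family dB dB \<eta>" and dB: "0 < dB"
  shows "\<exists>M. povm_element dA M \<and> 0 < prob_M dA dB M (proj_pure \<psi>) \<and>
     l1_coh dB (steered_unnorm dA M (proj_pure \<psi>)) \<eta> / prob_M dA dB M (proj_pure \<psi>) = real dB - 1"
proof -
  \<comment> \<open>\<open>\<Sum>\<^sub>k \<eta>\<^sub>k\<close> has overlap \<open>1\<close> with every basis vector\<close>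
  obtain u where u: "\<forall>b<dB. (\<Sum>a<dA. u a * \<psi> a b) = (\<Sum>k<dB. \<eta> k b)"
    using schmidt_full_rank_onto[OF phi_on xi_onb lam_nz schmidt] .
  have "(\<Sum>a<dA. u a * contract_B dB \<psi> (\<eta> i) a) = 1" if "i < dB" for i
  proof -
    have "(\<Sum>a<dA. u a * contract_B dB \<psi> (\<eta> i) a) = (\<Sum>b<dB. (\<Sum>a<dA. u a * \<psi> a b) * cnj (\<eta> i b))"
      unfolding contract_B_def sum_distrib_left sum_distrib_right by (subst sum.swap) (simp add: mult.assoc)
    also have "\<dots> = (\<Sum>b<dB. (\<Sum>k<dB. 1 * \<eta> k b) * cnj (\<eta> i b))"
      using u by simp
    finally show ?thesis using orthonormal_family_coeff[OF onb that, of "\<lambda>_. 1"] by simp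
  qed
  then show ?thesis using steered_l1_coh_rank_one[OF onb dB _ refl refl] by blast
qed

lemma schmidt_basis_orthonormal_eigenbasis:
  assumes phi_on: "orthonormal_family dA dB \<phi>"
    and xi_onb: "orthonormal_family dB dB \<xi>"
    and schmidt: "\<forall>a<dA. \<forall>b<dB. \<psi> a b = (\<Sum>i<dB. complex_of_real (lam i) * \<phi> i a * \<xi> i b)"
  shows "orthonormal_eigenbasis dB (ptrace_A dA (proj_pure \<psi>)) \<xi>"
  unfolding orthonormal_eigenbasis_def
proof (intro conjI allI impI exI)
  fix k b assume k: "k < dB" and b: "b < dB"
  have "(\<Sum>b'<dB. ptrace_A dA (proj_pure \<psi>) b b' * \<xi> k b')
      = (\<Sum>a<dA. \<psi> a b * cnj (contract_B dB \<psi> (\<xi> k) a))"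
    unfolding ptrace_A_def proj_pure_def contract_B_def cnj_sum sum_distrib_left sum_distrib_right
    by (subst sum.swap) (simp add: mult_ac)
  also have "\<dots> = of_real (lam k) * (\<Sum>a<dA. \<psi> a b * cnj (\<phi> k a))"
    by (simp add: schmidt_contract_B[OF xi_onb schmidt k] sum_distrib_left mult_ac)
  also have "\<dots> = of_real ((lam k)\<^sup>2) * \<xi> k b"
    by (simp add: schmidt_contract_A[OF phi_on schmidt k b] power2_eq_square)
  finally show "(\<Sum>b'<dB. ptrace_A dA (proj_pure \<psi>) b b' * \<xi> k b') = of_real ((lam k)\<^sup>2) * \<xi> k b" .
qed (rule xi_onb)

lemma sup_steered_l1_coh_eq:
  assumes phi_on: "orthonormal_family dA dB \<phi>"
    and xi_onb: "orthonormal_family dB dB \<xi>"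
    and lam_nz: "\<forall>i<dB. lam i \<noteq> 0"
    and schmidt: "\<forall>a<dA. \<forall>b<dB. \<psi> a b = (\<Sum>i<dB. complex_of_real (lam i) * \<phi> i a * \<xi> i b)"
    and onb: "orthonormal_family dB dB \<eta>" and dB: "0 < dB"
  shows "(SUP M \<in> {M. povm_element dA M \<and> prob_M dA dB M (proj_pure \<psi>) > 0}.
           l1_coh dB (steered_unnorm dA M (proj_pure \<psi>)) \<eta> / prob_M dA dB M (proj_pure \<psi>))
         = real dB - 1"
proof (rule cSup_eq_maximum)
  show "real dB - 1 \<in> (\<lambda>M. l1_coh dB (steered_unnorm dA M (proj_pure \<psi>)) \<eta> / prob_M dA dB M (proj_pure \<psi>))
      ` {M. povm_element dA M \<and> prob_M dA dB M (proj_pure \<psi>) > 0}"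
    using exists_povm_steered_l1_coh_eq[OF phi_on xi_onb lam_nz schmidt onb dB]
    by (metis (mono_tags, lifting) image_eqI mem_Collect_eq)
next
  fix x assume "x \<in> (\<lambda>M. l1_coh dB (steered_unnorm dA M (proj_pure \<psi>)) \<eta> / prob_M dA dB M (proj_pure \<psi>))
      ` {M. povm_element dA M \<and> prob_M dA dB M (proj_pure \<psi>) > 0}"
  then obtain M where M: "povm_element dA M" "prob_M dA dB M (proj_pure \<psi>) > 0"
    and x: "x = l1_coh dB (steered_unnorm dA M (proj_pure \<psi>)) \<eta> / prob_M dA dB M (proj_pure \<psi>)"
    by blast
  show "x \<le> real dB - 1"
    using l1_coh_steered_proj_pure_le[OF onb povm_element_imp_positive_semidef[OF M(1)]]
    unfolding x pos_divide_le_eq[OF M(2)] .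
qed

theorem mainTheorem2:
  fixes dA dB :: nat
    and lam :: "nat \<Rightarrow> real"
    and \<phi> \<xi> :: "nat \<Rightarrow> nat \<Rightarrow> complex"
    and \<psi> :: "nat \<Rightarrow> nat \<Rightarrow> complex"
  assumes phi_on: "orthonormal_family dA dB \<phi>"
    and xi_onb: "orthonormal_family dB dB \<xi>"
    and lam_nz: "\<forall>i<dB. lam i \<noteq> 0"
    and normalized: "(\<Sum>i<dB. (lam i)\<^sup>2) = 1"
    and schmidt: "\<forall>a<dA. \<forall>b<dB. \<psi> a b = (\<Sum>i<dB. complex_of_real (lam i) * \<phi> i a * \<xi> i b)"
  shows "max_steered_coherence dA dB (proj_pure \<psi>) = real dB - 1"
proof -
  define E where "E = {\<eta>. orthonormal_eigenbasis dB (ptrace_A dA (proj_pure \<psi>)) \<eta>}"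
  have "E \<noteq> {}"
    using schmidt_basis_orthonormal_eigenbasis[OF phi_on xi_onb schmidt] unfolding E_def by blast
  have "0 < dB" using normalized by (cases dB) auto
  then have sup: "(SUP M \<in> {M. povm_element dA M \<and> prob_M dA dB M (proj_pure \<psi>) > 0}.
      l1_coh dB (steered_unnorm dA M (proj_pure \<psi>)) \<eta> / prob_M dA dB M (proj_pure \<psi>)) = real dB - 1"
    if "\<eta> \<in> E" for \<eta>
    using that sup_steered_l1_coh_eq[OF phi_on xi_onb lam_nz schmidt]
    unfolding E_def orthonormal_eigenbasis_def by blast
  have "max_steered_coherence dA dB (proj_pure \<psi>) = (INF \<eta>\<in>E. real dB - 1)"
    unfolding max_steered_coherence_def E_def[symmetric] using sup by (rule INF_cong[OF refl])
  also have "\<dots> = real dB - 1" using \<open>E \<noteq> {}\<close> by simp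
  finally show ?thesis .
qed

end
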